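(* Let $X$ be a shift space such that $s_n(X)\le k$ for all $n\ge0$. Then the number of right asymptotic classes of $X$ is finite and at most $k$.
   Context: $A$ is a finite alphabet; a shift space is a closed shift-invariant subset $X\subseteq A^{\mathbb Z}$; $p_n(X)$ is the number of words of length $n$ occurring as factors of elements of $X$, and $s_n(X)=p_{n+1}(X)-p_n(X)$. For $x\in A^{\mathbb Z}$ write $x^+=x_0x_1\cdots$. Two elements $x,y\in X$ are right asymptotically equivalent if there are shifts $x'=\sigma^i(x)$, $y'=\sigma^j(y)$ with $x'^+=y'^+$ (i.e. they have a common tail). Each equivalence class is a union of orbits; the right asymptotic classes are the equivalence classes which contain more than one orbit. *)

theory Defs
  imports "HOL-Analysis.Analysis"
begin

text \<open>Points of the full shift over a finite alphabet 'a (a finite type) are maps int => 'a.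
  The full shift carries the product topology of discrete topologies.\<close>

definition shift :: "(int \<Rightarrow> 'a) \<Rightarrow> (int \<Rightarrow> 'a)" where
  "shift x = (\<lambda>m. x (m + 1))"

definition shiftn :: "int \<Rightarrow> (int \<Rightarrow> 'a) \<Rightarrow> (int \<Rightarrow> 'a)" where
  "shiftn i x = (\<lambda>m. x (m + i))"

definition shift_space :: "(int \<Rightarrow> 'a::finite) set \<Rightarrow> bool" where
  "shift_space X \<longleftrightarrow>
     closedin (product_topology (\<lambda>_::int. discrete_topology (UNIV::'a set)) UNIV) X
     \<and> shift ` X = X"

definition language :: "nat \<Rightarrow> (int \<Rightarrow> 'a) set \<Rightarrow> 'a list set" where
  "language n X = {w. length w = n \<and> (\<exists>x\<in>X. \<exists>i::int. \<forall>j<n. x (i + int j) = w ! j)}"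

definition complexity :: "(int \<Rightarrow> 'a) set \<Rightarrow> nat \<Rightarrow> nat" where
  "complexity X n = card (language n X)"

definition complexity_diff :: "(int \<Rightarrow> 'a) set \<Rightarrow> nat \<Rightarrow> int" where
  "complexity_diff X n = int (complexity X (Suc n)) - int (complexity X n)"

definition right_asym :: "(int \<Rightarrow> 'a) \<Rightarrow> (int \<Rightarrow> 'a) \<Rightarrow> bool" where
  "right_asym x y \<longleftrightarrow> (\<exists>i j::int. \<forall>m::int. m \<ge> 0 \<longrightarrow> shiftn i x m = shiftn j y m)"

definition orbit :: "(int \<Rightarrow> 'a) \<Rightarrow> (int \<Rightarrow> 'a) set" where
  "orbit x = {shiftn i x | i. True}"

definition asym_class :: "(int \<Rightarrow> 'a) set \<Rightarrow> (int \<Rightarrow> 'a) \<Rightarrow> (int \<Rightarrow> 'a) set" where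
  "asym_class X x = {y \<in> X. right_asym x y}"

text \<open>right asymptotic classes: equivalence classes containing more than one orbit\<close>
definition right_asym_classes :: "(int \<Rightarrow> 'a) set \<Rightarrow> (int \<Rightarrow> 'a) set set" where
  "right_asym_classes X =
     {C. \<exists>x\<in>X. C = asym_class X x \<and> (\<exists>y\<in>C. y \<notin> orbit x)}"

end

theory Submission
  imports Defs
begin

text \<open>
  Two right asymptotic points \<open>x, y\<close> in different orbits agree from some position on but not
  everywhere; aligning them at the last position where they disagree yields a right-infinite word
  \<open>u\<close> with two distinct one-letter left extensions in \<open>X\<close>, so every prefix of \<open>u\<close> is a left
  special word. Different classes produce different such tails, and finitely many distinct tails
  already differ in their prefixes of some common length \<open>N\<close>; hence any \<open>m\<close> classes give \<open>m\<close>
  left special words of length \<open>N\<close>. Finally, every word of length \<open>n\<close> has a left extension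
  and a left special word has at least two, so there are at most \<open>s\<^sub>n(X) \<le> k\<close> left special
  words of length \<open>n\<close>.
\<close>

lemma card_add_card_le_card_if_fibres:
  assumes "finite B" and "f ` B = A" and "S \<subseteq> A"
    and "\<And>a. a \<in> S \<Longrightarrow> \<exists>b\<in>B. \<exists>b'\<in>B. b \<noteq> b' \<and> f b = a \<and> f b' = a"
  shows "card A + card S \<le> card B"
proof -
  have "finite A" using assms(1,2) by blast
  define fibre where "fibre a = {b \<in> B. f b = a}" for a
  have "card A + card S = (\<Sum>a\<in>A. 1 + of_bool (a \<in> S))"
    using \<open>finite A\<close> assms(3) by (simp only: sum.distrib) (simp add: Int_absorb1)
  also have "\<dots> \<le> (\<Sum>a\<in>A. card (fibre a))"
  proof (rule sum_mono)
    fix a assume "a \<in> A"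
    have "finite (fibre a)" using assms(1) by (simp add: fibre_def)
    show "1 + of_bool (a \<in> S) \<le> card (fibre a)"
    proof (cases "a \<in> S")
      case True
      then obtain b b' where "{b, b'} \<subseteq> fibre a" "b \<noteq> b'"
        using assms(4)[OF True] unfolding fibre_def by blast
      then have "card {b, b'} \<le> card (fibre a)" using \<open>finite (fibre a)\<close> by (intro card_mono)
      then show ?thesis using True \<open>b \<noteq> b'\<close> by simp
    next
      case False
      have "fibre a \<noteq> {}" using \<open>a \<in> A\<close> assms(2) by (auto simp: fibre_def)
      then show ?thesis using False \<open>finite (fibre a)\<close> by (simp add: Suc_le_eq card_gt_0_iff)
    qed
  qed
  also have "\<dots> = card B"
    using sum.group[OF assms(1) \<open>finite A\<close>, of f "\<lambda>_. 1::nat"] assms(2) by (simp add: fibre_def)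
  finally show ?thesis .
qed

definition factor :: "(int \<Rightarrow> 'a) \<Rightarrow> int \<Rightarrow> nat \<Rightarrow> 'a list" where
  "factor x i n = map (\<lambda>j. x (i + int j)) [0..<n]"

lemma factor_Suc: "factor x i (Suc n) = x i # factor x (i + 1) n"
  unfolding factor_def
  by (simp only: upt_conv_Cons[of 0] zero_less_Suc map_Suc_upt[symmetric]) (simp add: algebra_simps)

lemma language_eq_factors: "language n X = {factor x i n | x i. x \<in> X}"
proof (intro equalityI subsetI)
  fix w assume "w \<in> language n X"
  then obtain x i where "x \<in> X" "length w = n" "\<forall>j<n. x (i + int j) = w ! j"
    by (auto simp: language_def)
  then have "w = factor x i n" by (intro nth_equalityI) (auto simp: factor_def)
  then show "w \<in> {factor x i n | x i. x \<in> X}" using \<open>x \<in> X\<close> by blast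
next
  fix w assume "w \<in> {factor x i n | x i. x \<in> X}"
  then obtain x i where "x \<in> X" "w = factor x i n" by blast
  then show "w \<in> language n X"
    by (auto simp: language_def factor_def intro!: bexI[of _ x] exI[of _ i])
qed

lemma finite_language: "finite (language n (X :: (int \<Rightarrow> 'a::finite) set))"
proof (rule finite_subset)
  show "language n X \<subseteq> {w. set w \<subseteq> UNIV \<and> length w = n}" by (auto simp: language_def)
qed (rule finite_lists_length_eq[OF finite_class.finite_UNIV])

lemma tl_image_language: "tl ` language (Suc n) X = language n X"
proof (intro equalityI subsetI)
  fix w assume "w \<in> tl ` language (Suc n) X"
  then show "w \<in> language n X" unfolding language_eq_factors by (force simp: factor_Suc)
next
  fix w assume "w \<in> language n X"
  then obtain x i where "x \<in> X" "w = factor x i n" by (auto simp: language_eq_factors)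
  then have "w = tl (factor x (i - 1) (Suc n))" by (simp add: factor_Suc)
  then show "w \<in> tl ` language (Suc n) X" using \<open>x \<in> X\<close> by (auto simp: language_eq_factors)
qed

definition left_special :: "nat \<Rightarrow> (int \<Rightarrow> 'a) set \<Rightarrow> 'a list set" where
  "left_special n X =
     {w. \<exists>a b. a \<noteq> b \<and> a # w \<in> language (Suc n) X \<and> b # w \<in> language (Suc n) X}"

lemma left_special_subset_language: "left_special n X \<subseteq> language n X"
proof
  fix w assume "w \<in> left_special n X"
  then obtain a where "a # w \<in> language (Suc n) X" by (auto simp: left_special_def)
  then show "w \<in> language n X" by (metis list.sel(3) image_eqI tl_image_language)
qed

lemma card_left_special_le_complexity_diff:
  "int (card (left_special n (X :: (int \<Rightarrow> 'a::finite) set))) \<le> complexity_diff X n"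
proof -
  have "card (language n X) + card (left_special n X) \<le> card (language (Suc n) X)"
  proof (rule card_add_card_le_card_if_fibres[OF finite_language tl_image_language])
    show "left_special n X \<subseteq> language n X" by (rule left_special_subset_language)
  next
    fix w assume "w \<in> left_special n X"
    then obtain a b where "a \<noteq> b" "a # w \<in> language (Suc n) X" "b # w \<in> language (Suc n) X"
      by (auto simp: left_special_def)
    then show "\<exists>v\<in>language (Suc n) X. \<exists>v'\<in>language (Suc n) X. v \<noteq> v' \<and> tl v = w \<and> tl v' = w"
      by (intro bexI[of _ "a # w"] bexI[of _ "b # w"]) auto
  qed
  then show ?thesis by (simp add: complexity_diff_def complexity_def)
qed

lemma right_asym_sym: "right_asym x y \<Longrightarrow> right_asym y x"
  unfolding right_asym_def by metis

lemma right_asym_trans: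
  assumes "right_asym x y" and "right_asym y z"
  shows "right_asym x z"
proof -
  obtain i j where ij: "\<forall>m\<ge>0. x (m + i) = y (m + j)"
    using assms(1) unfolding right_asym_def shiftn_def by auto
  obtain i' j' where ij': "\<forall>m\<ge>0. y (m + i') = z (m + j')"
    using assms(2) unfolding right_asym_def shiftn_def by auto
  define a where "a = max 0 (i' - j)"
  define b where "b = max 0 (j - i')"
  have "x (m + (i + a)) = z (m + (j' + b))" if "m \<ge> 0" for m
  proof -
    have "x (m + (i + a)) = x ((m + a) + i)" by (simp add: algebra_simps)
    also have "\<dots> = y ((m + a) + j)" using ij that by (simp add: a_def)
    also have "\<dots> = y ((m + b) + i')" by (simp add: a_def b_def algebra_simps max_def)
    also have "\<dots> = z ((m + b) + j')" using ij' that by (simp add: b_def)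
    also have "\<dots> = z (m + (j' + b))" by (simp add: algebra_simps)
    finally show ?thesis .
  qed
  then show ?thesis unfolding right_asym_def shiftn_def by blast
qed

lemma asym_class_eq: "right_asym x y \<Longrightarrow> asym_class X x = asym_class X y"
  unfolding asym_class_def by (meson right_asym_sym right_asym_trans)

lemma last_disagreement:
  fixes f g :: "int \<Rightarrow> 'a"
  assumes "\<forall>m\<ge>0. f m = g m" and "f \<noteq> g"
  obtains p where "\<forall>m\<ge>p. f m = g m" and "f (p - 1) \<noteq> g (p - 1)"
proof -
  have "\<exists>d::nat. f (- int d - 1) \<noteq> g (- int d - 1)"
  proof (rule ccontr)
    assume "\<nexists>d::nat. f (- int d - 1) \<noteq> g (- int d - 1)"
    then have all: "\<forall>d::nat. f (- int d - 1) = g (- int d - 1)" by blast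
    have "f m = g m" for m
    proof (cases "m \<ge> 0")
      case False
      then have "m = - int (nat (- m - 1)) - 1" by simp
      then show ?thesis using all by metis
    qed (use assms(1) in blast)
    then show False using assms(2) by blast
  qed
  define d where "d = (LEAST d::nat. f (- int d - 1) \<noteq> g (- int d - 1))"
  show thesis
  proof
    show "f (- int d - 1) \<noteq> g (- int d - 1)"
      unfolding d_def by (rule LeastI_ex) fact
    show "\<forall>m\<ge>- int d. f m = g m"
    proof (intro allI impI)
      fix m assume "m \<ge> - int d"
      show "f m = g m"
      proof (cases "m \<ge> 0")
        case False
        then have "nat (- m - 1) < d" using \<open>m \<ge> - int d\<close> by linarith
        then have "f (- int (nat (- m - 1)) - 1) = g (- int (nat (- m - 1)) - 1)"
          unfolding d_def by (rule not_less_Least[THEN notnotD])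
        then show ?thesis using False by simp
      qed (use assms(1) in blast)
    qed
  qed
qed

definition left_special_tails :: "(int \<Rightarrow> 'a) set \<Rightarrow> (nat \<Rightarrow> 'a) set" where
  "left_special_tails C =
     {u. \<exists>x\<in>C. \<exists>y\<in>C. \<exists>p q.
          (\<forall>m. x (p + int m) = u m \<and> y (q + int m) = u m) \<and> x (p - 1) \<noteq> y (q - 1)}"

lemma prefix_mem_left_special:
  assumes "C \<subseteq> X" and "u \<in> left_special_tails C"
  shows "map u [0..<n] \<in> left_special n X"
proof -
  obtain x y p q where xy: "x \<in> X" "y \<in> X" "\<forall>m. x (p + int m) = u m \<and> y (q + int m) = u m"
    and split: "x (p - 1) \<noteq> y (q - 1)"
    using assms unfolding left_special_tails_def by blast
  have "map u [0..<n] = factor x p n" "map u [0..<n] = factor y q n"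
    using xy(3) by (simp_all add: factor_def)
  then have "x (p - 1) # map u [0..<n] = factor x (p - 1) (Suc n)"
    and "y (q - 1) # map u [0..<n] = factor y (q - 1) (Suc n)"
    by (simp_all add: factor_Suc)
  then have "x (p - 1) # map u [0..<n] \<in> language (Suc n) X"
    and "y (q - 1) # map u [0..<n] \<in> language (Suc n) X"
    using xy(1,2) unfolding language_eq_factors by blast+
  then show ?thesis
    using split unfolding left_special_def by blast
qed

lemma left_special_tails_nonempty:
  assumes "C \<in> right_asym_classes X"
  shows "left_special_tails C \<noteq> {}"
proof -
  obtain x y where "x \<in> X" and C: "C = asym_class X x" and "y \<in> C" and "y \<notin> orbit x"
    using assms unfolding right_asym_classes_def by blast
  then obtain i j where ij: "\<forall>m\<ge>0. shiftn i x m = shiftn j y m"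
    unfolding asym_class_def right_asym_def by blast
  have "shiftn i x \<noteq> shiftn j y"
  proof
    assume "shiftn i x = shiftn j y"
    then have "y n = shiftn (i - j) x n" for n
      by (metis add.commute diff_add_cancel shiftn_def add_diff_eq)
    then have "y = shiftn (i - j) x" by blast
    then show False using \<open>y \<notin> orbit x\<close> unfolding orbit_def by blast
  qed
  with ij obtain p where agree: "\<forall>m\<ge>p. shiftn i x m = shiftn j y m"
    and split: "shiftn i x (p - 1) \<noteq> shiftn j y (p - 1)"
    by (rule last_disagreement)
  have "x \<in> C" using \<open>x \<in> X\<close> unfolding C asym_class_def right_asym_def by blast
  have "x (p + i + int m) = y (p + j + int m)" for m
    using agree[rule_format, of "p + int m"] by (simp add: shiftn_def algebra_simps)
  then have "\<forall>m. x (p + i + int m) = x (p + i + int m) \<and> y (p + j + int m) = x (p + i + int m)"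
    by simp
  moreover have "x (p + i - 1) \<noteq> y (p + j - 1)"
    using split by (simp add: shiftn_def algebra_simps)
  ultimately have "(\<lambda>m. x (p + i + int m)) \<in> left_special_tails C"
    unfolding left_special_tails_def using \<open>x \<in> C\<close> \<open>y \<in> C\<close> by blast
  then show ?thesis by blast
qed

lemma right_asym_classes_eq_if_common_tail:
  assumes "C \<in> right_asym_classes X" and "D \<in> right_asym_classes X"
    and "u \<in> left_special_tails C" and "u \<in> left_special_tails D"
  shows "C = D"
proof -
  obtain c d where C: "C = asym_class X c" and D: "D = asym_class X d"
    using assms(1,2) unfolding right_asym_classes_def by blast
  obtain x p x' p' where "x \<in> C" "\<forall>m. x (p + int m) = u m" "x' \<in> D" "\<forall>m. x' (p' + int m) = u m"
    using assms(3,4) unfolding left_special_tails_def by blast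
  moreover have "right_asym x x'"
    unfolding right_asym_def shiftn_def
  proof (intro exI allI impI)
    fix m :: int assume "m \<ge> 0"
    then obtain k where "m = int k" using nonneg_eq_int by blast
    then show "x (m + p) = x' (m + p')"
      using \<open>\<forall>m. x (p + int m) = u m\<close> \<open>\<forall>m. x' (p' + int m) = u m\<close> by (simp add: add.commute)
  qed
  ultimately have "right_asym c x" "right_asym x x'" "right_asym d x'"
    unfolding C D asym_class_def by auto
  then have "right_asym c d" by (meson right_asym_sym right_asym_trans)
  then show ?thesis unfolding C D by (rule asym_class_eq)
qed

lemma ex_inj_on_prefixes:
  fixes U :: "(nat \<Rightarrow> 'a) set"
  assumes "finite U"
  obtains N where "inj_on (\<lambda>u. map u [0..<N]) U"
proof
  define first_diff where "first_diff = (\<lambda>(u, v). LEAST n. u n \<noteq> (v :: nat \<Rightarrow> 'a) n)"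
  define N where "N = Suc (Max (first_diff ` (U \<times> U)))"
  show "inj_on (\<lambda>u. map u [0..<N]) U"
  proof (rule inj_onI, rule ccontr)
    fix u v assume "u \<in> U" "v \<in> U" and eq: "map u [0..<N] = map v [0..<N]" and "u \<noteq> v"
    then have "\<exists>n. u n \<noteq> v n" by blast
    then have neq: "u (first_diff (u, v)) \<noteq> v (first_diff (u, v))"
      unfolding first_diff_def prod.case by (rule LeastI_ex)
    have "first_diff (u, v) \<le> Max (first_diff ` (U \<times> U))"
      using \<open>u \<in> U\<close> \<open>v \<in> U\<close> assms by (intro Max_ge) auto
    then have "first_diff (u, v) < N" by (simp add: N_def)
    then show False
      using neq arg_cong[OF eq, of "\<lambda>w. w ! first_diff (u, v)"] by simp
  qed
qed

lemma card_subset_right_asym_classes_le_left_special: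
  assumes "finite S" and "S \<subseteq> right_asym_classes X"
  obtains N where "card S \<le> card (left_special N (X :: (int \<Rightarrow> 'a::finite) set))"
proof -
  define tail where "tail C = (SOME u. u \<in> left_special_tails C)" for C :: "(int \<Rightarrow> 'a) set"
  have tail: "tail C \<in> left_special_tails C" if "C \<in> S" for C
  proof -
    have "C \<in> right_asym_classes X" using assms(2) that by blast
    then show ?thesis unfolding tail_def by (simp add: some_in_eq left_special_tails_nonempty)
  qed
  have "inj_on tail S"
  proof (rule inj_onI)
    fix C D assume "C \<in> S" "D \<in> S" "tail C = tail D"
    then show "C = D"
      using tail[of C] tail[of D] assms(2)
      by (intro right_asym_classes_eq_if_common_tail[of C X D "tail C"]) auto
  qed
  obtain N where N: "inj_on (\<lambda>u. map u [0..<N]) (tail ` S)"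
    using ex_inj_on_prefixes finite_imageI[OF assms(1)] by blast
  have "C \<subseteq> X" if "C \<in> S" for C
    using that assms(2) unfolding right_asym_classes_def asym_class_def by blast
  then have "(\<lambda>u. map u [0..<N]) ` tail ` S \<subseteq> left_special N X"
    using tail prefix_mem_left_special by blast
  then have "card ((\<lambda>u. map u [0..<N]) ` tail ` S) \<le> card (left_special N X)"
    by (rule card_mono[rotated]) (rule finite_subset[OF left_special_subset_language finite_language])
  moreover have "card ((\<lambda>u. map u [0..<N]) ` tail ` S) = card S"
    using N \<open>inj_on tail S\<close> by (simp add: card_image)
  ultimately show ?thesis by (intro that) simp
qed

theorem mainTheorem4:
  fixes X :: "(int \<Rightarrow> 'a::finite) set" and k :: nat
  assumes "shift_space X"
    and "\<And>n. complexity_diff X n \<le> int k"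
  shows "finite (right_asym_classes X) \<and> card (right_asym_classes X) \<le> k"
proof (rule finite_if_finite_subsets_card_bdd)
  fix S assume "S \<subseteq> right_asym_classes X" and "finite S"
  with card_subset_right_asym_classes_le_left_special
  obtain N where "card S \<le> card (left_special N X)" by blast
  also have "\<dots> \<le> k"
    using card_left_special_le_complexity_diff[of N X] assms(2)[of N] by linarith
  finally show "card S \<le> k" .
qed

end
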